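(* Let $T=(V,E)$ be a finite rooted binary tree, $\Pr$ a probability distribution over a finite set of queries, $u\in V$ a node with left child $\ell(u)$ and right child $r(u)$, and $R_u\subseteq T(u)$. Let $R_{r(u)}=T(r(u))\cap R_u$ and $R_{\ell(u)}=T(\ell(u))\cap R_u$. Then for every $v\in A(u)\cup\{\epsilon\}$: $$B_u(R_u\cup\{v\})=\begin{cases}B_u(\{u,v\})+B_{r(u)}(R_{r(u)}\cup\{u\})+B_{\ell(u)}(R_{\ell(u)}\cup\{u\}), & \text{if } u\in R_u,\\ B_{r(u)}(R_{r(u)}\cup\{v\})+B_{\ell(u)}(R_{\ell(u)}\cup\{v\}), & \text{otherwise.}\end{cases}$$
   Context: $T=(V,E)$ is a finite rooted tree in which every node has at most two children. $T(u)$ is the set of nodes of the subtree rooted at $u$ (including $u$); $A(u)$ is the set of proper ancestors of $u$. Each non-leaf node is associated with a variable of a finite set $X$; $\mathrm{vars}(u)$ is the set of variables associated with nodes of $T(u)$. Each query $q$ determines $Z_q\subseteq X$. For $R\subseteq V$, $w\in V$: $I_q(w,R)=1$ iff $w\in R$, $\mathrm{vars}(w)\subseteq Z_q$, and no $x\in A(w)\cap R$ has $\mathrm{vars}(x)\subseteq Z_q$; else $0$; $\mathbb{E}[I(w,R)]=\sum_q\Pr(q)I_q(w,R)$. Nodes have partial costs $c(x)$; total cost $C(w)=\sum_{x\in T(w)}c(x)$. Partial benefit: $B_u(R)=\sum_{w\in R\cap T(u)}\mathbb{E}[I(w,R)]C(w)$. $\epsilon$ is an auxiliary symbol not in $V$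 (meaning "no ancestor selected"), and by convention $\epsilon$ is ignored in set arguments: $B_u(S\cup\{\epsilon\}):=B_u(S)$. *)

theory Defs
  imports Complex_Main
begin

definition rooted_binary_tree :: "'v set \<Rightarrow> ('v \<times> 'v) set \<Rightarrow> 'v \<Rightarrow> bool" where
  "rooted_binary_tree V E rt \<longleftrightarrow>
     finite V \<and> rt \<in> V \<and> E \<subseteq> V \<times> V \<and>
     (\<forall>w\<in>V. (rt, w) \<in> E\<^sup>*) \<and>
     (\<forall>w. (w, rt) \<notin> E) \<and>
     (\<forall>w\<in>V. w \<noteq> rt \<longrightarrow> (\<exists>!p. (p, w) \<in> E)) \<and>
     (\<forall>u\<in>V. card {w. (u, w) \<in> E} \<le> 2)"

definition subtree :: "('v \<times> 'v) set \<Rightarrow> 'v \<Rightarrow> 'v set" where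
  "subtree E u = {w. (u, w) \<in> E\<^sup>*}"

definition ancestors :: "('v \<times> 'v) set \<Rightarrow> 'v \<Rightarrow> 'v set" where
  "ancestors E u = {x. (x, u) \<in> E\<^sup>+}"

definition is_leaf :: "('v \<times> 'v) set \<Rightarrow> 'v \<Rightarrow> bool" where
  "is_leaf E u \<longleftrightarrow> (\<forall>w. (u, w) \<notin> E)"

definition vars :: "('v \<times> 'v) set \<Rightarrow> ('v \<Rightarrow> 'x) \<Rightarrow> 'v \<Rightarrow> 'x set" where
  "vars E var u = var ` {x \<in> subtree E u. \<not> is_leaf E x}"

definition Iq :: "('v \<times> 'v) set \<Rightarrow> ('v \<Rightarrow> 'x) \<Rightarrow> ('q \<Rightarrow> 'x set) \<Rightarrow> 'q \<Rightarrow> 'v \<Rightarrow> 'v set \<Rightarrow> bool" where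
  "Iq E var Z q w R \<longleftrightarrow>
     w \<in> R \<and> vars E var w \<subseteq> Z q \<and>
     \<not> (\<exists>x \<in> ancestors E w \<inter> R. vars E var x \<subseteq> Z q)"

definition EI :: "'q set \<Rightarrow> ('q \<Rightarrow> real) \<Rightarrow> ('v \<times> 'v) set \<Rightarrow> ('v \<Rightarrow> 'x) \<Rightarrow> ('q \<Rightarrow> 'x set)
    \<Rightarrow> 'v \<Rightarrow> 'v set \<Rightarrow> real" where
  "EI Q P E var Z w R = (\<Sum>q\<in>Q. P q * (if Iq E var Z q w R then 1 else 0))"

definition Ctot :: "('v \<times> 'v) set \<Rightarrow> ('v \<Rightarrow> real) \<Rightarrow> 'v \<Rightarrow> real" where
  "Ctot E c w = (\<Sum>x\<in>subtree E w. c x)"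

definition Bu :: "'q set \<Rightarrow> ('q \<Rightarrow> real) \<Rightarrow> ('v \<times> 'v) set \<Rightarrow> ('v \<Rightarrow> 'x) \<Rightarrow> ('q \<Rightarrow> 'x set)
    \<Rightarrow> ('v \<Rightarrow> real) \<Rightarrow> 'v \<Rightarrow> 'v set \<Rightarrow> real" where
  "Bu Q P E var Z c u R = (\<Sum>w\<in>R \<inter> subtree E u. EI Q P E var Z w R * Ctot E c w)"

end

theory Submission
  imports Defs
begin

text \<open>Whether a node w is counted in B_u(R) depends on R only through w itself and through the
  ancestors of w that lie in R. The ancestors of a node below a child of u are u, the ancestors
  of u, and nodes inside the child's subtree; since the candidate v is an ancestor of u, its
  variables include those of u, so once u is selected v no longer matters below u. Splitting
  the sum defining B_u(R) over u and the two child subtrees gives the recurrence.\<close>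

lemma vars_antimono:
  assumes "(a, u) \<in> E\<^sup>*"
  shows "vars E var u \<subseteq> vars E var a"
  using assms unfolding vars_def subtree_def by (blast intro: rtrancl_trans)

lemma EI_cong:
  assumes "w \<in> R \<longleftrightarrow> w \<in> R'"
    and "\<And>q. (\<exists>x\<in>ancestors E w \<inter> R. vars E var x \<subseteq> Z q)
             \<longleftrightarrow> (\<exists>x\<in>ancestors E w \<inter> R'. vars E var x \<subseteq> Z q)"
  shows "EI Q P E var Z w R = EI Q P E var Z w R'"
  using assms unfolding EI_def Iq_def by simp

lemma EI_cong_ancestors:
  assumes "w \<in> R \<longleftrightarrow> w \<in> R'" "ancestors E w \<inter> R = ancestors E w \<inter> R'"
  shows "EI Q P E var Z w R = EI Q P E var Z w R'"
  using assms by (intro EI_cong) auto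

lemma EI_Un_dominated:
  assumes "w \<notin> D" "b \<in> ancestors E w \<inter> R" "\<And>a. a \<in> D \<Longrightarrow> vars E var b \<subseteq> vars E var a"
  shows "EI Q P E var Z w (R \<union> D) = EI Q P E var Z w R"
  using assms by (intro EI_cong) blast+

lemma Bu_cong:
  assumes "R \<inter> subtree E u = R' \<inter> subtree E u"
    and "\<And>w. w \<in> R \<inter> subtree E u \<Longrightarrow> EI Q P E var Z w R = EI Q P E var Z w R'"
  shows "Bu Q P E var Z c u R = Bu Q P E var Z c u R'"
  unfolding Bu_def assms(1) using assms by (intro sum.cong) auto

lemma Bu_empty:
  assumes "R \<inter> subtree E u = {}"
  shows "Bu Q P E var Z c u R = 0"
  unfolding Bu_def using assms by simp

context
  fixes V :: "'v set" and E :: "('v \<times> 'v) set" and rt :: 'v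
  assumes tree: "rooted_binary_tree V E rt"
begin

lemma parent_unique:
  assumes "(p, w) \<in> E" "(p', w) \<in> E"
  shows "p = p'"
proof -
  have "w \<in> V" "w \<noteq> rt" using tree assms(1) unfolding rooted_binary_tree_def by blast+
  then show ?thesis using tree assms unfolding rooted_binary_tree_def by blast
qed

lemma trancl_irrefl: "(x, x) \<notin> E\<^sup>+"
proof
  assume "(x, x) \<in> E\<^sup>+"
  have EV: "E \<subseteq> V \<times> V" and reach: "\<forall>w\<in>V. (rt, w) \<in> E\<^sup>*" and no_parent: "\<forall>w. (w, rt) \<notin> E"
    using tree unfolding rooted_binary_tree_def by blast+
  obtain p where "(p, x) \<in> E" using \<open>(x, x) \<in> E\<^sup>+\<close> by (meson tranclD2)
  then obtain n where "(rt, x) \<in> E ^^ n" using EV reach rtrancl_power by blast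
  then show False using \<open>(x, x) \<in> E\<^sup>+\<close>
  proof (induction n arbitrary: x)
    case 0
    then show ?case using no_parent by (metis relpow_0_E tranclD2)
  next
    case (Suc n)
    then obtain y where y: "(rt, y) \<in> E ^^ n" "(y, x) \<in> E" by auto
    obtain p where p: "(x, p) \<in> E\<^sup>*" "(p, x) \<in> E" using Suc.prems(2) by (meson tranclD2)
    have "p = y" using parent_unique[OF p(2) y(2)] .
    then have "(y, y) \<in> E\<^sup>+" using p y(2) by (meson rtrancl_into_trancl2)
    then show ?case using Suc.IH y(1) by blast
  qed
qed

lemma rtrancl_common_descendant_comparable:
  assumes "(x, p) \<in> E\<^sup>*" "(y, p) \<in> E\<^sup>*"
  shows "(x, y) \<in> E\<^sup>* \<or> (y, x) \<in> E\<^sup>*"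
  using assms
proof (induction arbitrary: y rule: rtrancl_induct)
  case base
  then show ?case by simp
next
  case (step p' p)
  from step.prems show ?case
  proof (cases rule: rtranclE)
    case base
    then show ?thesis using step.hyps by (meson rtrancl.rtrancl_into_rtrancl)
  next
    case (step q)
    then have "q = p'" using parent_unique step.hyps(2) by blast
    then show ?thesis using step.IH step by blast
  qed
qed

lemma trancl_through_parent:
  assumes "(x, y) \<in> E\<^sup>+" "(p, y) \<in> E"
  shows "(x, p) \<in> E\<^sup>*"
proof -
  obtain p' where "(x, p') \<in> E\<^sup>*" "(p', y) \<in> E" using assms(1) by (meson tranclD2)
  then show ?thesis using parent_unique assms(2) by blast
qed

lemma ancestors_Int_subtree: "ancestors E u \<inter> subtree E u = {}"
  using trancl_irrefl unfolding ancestors_def subtree_def by (blast intro: trancl_rtrancl_trancl)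

lemma subtree_subset_V:
  assumes "u \<in> V"
  shows "subtree E u \<subseteq> V"
proof
  fix w assume "w \<in> subtree E u"
  then have "(u, w) \<in> E\<^sup>*" by (simp add: subtree_def)
  then show "w \<in> V"
    using tree assms unfolding rooted_binary_tree_def by (induction rule: rtrancl_induct) auto
qed

lemma ancestors_below_child:
  assumes ch: "(u, ch) \<in> E" and y: "y \<in> subtree E ch"
  shows "ancestors E y \<subseteq> insert u (ancestors E u) \<union> subtree E ch"
proof
  fix x assume "x \<in> ancestors E y"
  then have "(x, y) \<in> E\<^sup>*" "(ch, y) \<in> E\<^sup>*" using y by (auto simp: ancestors_def subtree_def)
  then have "(x, ch) \<in> E\<^sup>* \<or> (ch, x) \<in> E\<^sup>*" by (rule rtrancl_common_descendant_comparable)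
  then consider "(ch, x) \<in> E\<^sup>*" | "(x, ch) \<in> E\<^sup>+" by (auto dest: rtranclD)
  then show "x \<in> insert u (ancestors E u) \<union> subtree E ch"
  proof cases
    case 1
    then show ?thesis by (simp add: subtree_def)
  next
    case 2
    then have "(x, u) \<in> E\<^sup>*" using ch by (rule trancl_through_parent)
    then show ?thesis using rtranclD[of x u E] unfolding ancestors_def by blast
  qed
qed

lemma subtree_child_subset:
  assumes "(u, ch) \<in> E"
  shows "subtree E ch \<subseteq> subtree E u - {u}"
proof -
  have "(u, u) \<notin> E\<^sup>+" by (rule trancl_irrefl)
  then have "u \<notin> subtree E ch"
    using rtrancl_into_trancl2[OF assms] unfolding subtree_def by blast
  moreover have "subtree E ch \<subseteq> subtree E u"
    using converse_rtrancl_into_rtrancl[OF assms] unfolding subtree_def by blast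
  ultimately show ?thesis by blast
qed

lemma subtree_children_partition:
  assumes u: "u \<in> V" "(u, l) \<in> E" "(u, r) \<in> E" "l \<noteq> r"
  shows "subtree E u = {u} \<union> subtree E l \<union> subtree E r"
    and "subtree E l \<inter> subtree E r = {}"
    and "u \<notin> subtree E l" "u \<notin> subtree E r"
proof -
  have children: "w = l \<or> w = r" if "(u, w) \<in> E" for w
  proof (rule ccontr)
    assume "\<not> (w = l \<or> w = r)"
    have "E \<subseteq> V \<times> V" "finite V" using tree unfolding rooted_binary_tree_def by blast+
    then have "finite {w. (u, w) \<in> E}" by (blast intro: finite_subset)
    moreover have "{l, r, w} \<subseteq> {w. (u, w) \<in> E}" using that u by auto
    ultimately have "card {l, r, w} \<le> card {w. (u, w) \<in> E}" by (rule card_mono)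
    moreover have "card {w. (u, w) \<in> E} \<le> 2" using tree u(1) unfolding rooted_binary_tree_def by blast
    ultimately show False using \<open>\<not> (w = l \<or> w = r)\<close> u(4) by auto
  qed
  show "subtree E u = {u} \<union> subtree E l \<union> subtree E r"
  proof
    show "subtree E u \<subseteq> {u} \<union> subtree E l \<union> subtree E r"
    proof
      fix w assume "w \<in> subtree E u"
      then have "(u, w) \<in> E\<^sup>*" by (simp add: subtree_def)
      then show "w \<in> {u} \<union> subtree E l \<union> subtree E r"
        by (cases rule: converse_rtranclE) (auto simp: subtree_def dest: children)
    qed
  qed (use u subtree_child_subset in \<open>auto simp: subtree_def\<close>)
  show "u \<notin> subtree E l" "u \<notin> subtree E r" using u subtree_child_subset by blast+
  show "subtree E l \<inter> subtree E r = {}"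
  proof (rule ccontr)
    assume "subtree E l \<inter> subtree E r \<noteq> {}"
    then obtain w where "(l, w) \<in> E\<^sup>*" "(r, w) \<in> E\<^sup>*" by (auto simp: subtree_def)
    then have "(l, r) \<in> E\<^sup>* \<or> (r, l) \<in> E\<^sup>*" by (rule rtrancl_common_descendant_comparable)
    then have "(l, r) \<in> E\<^sup>+ \<or> (r, l) \<in> E\<^sup>+" using u(4) by (auto dest: rtranclD)
    then have "(l, u) \<in> E\<^sup>* \<or> (r, u) \<in> E\<^sup>*" using u(2,3) trancl_through_parent by blast
    then show False using \<open>u \<notin> subtree E l\<close> \<open>u \<notin> subtree E r\<close> by (auto simp: subtree_def)
  qed
qed

lemma Bu_split_children:
  assumes u: "u \<in> V" "(u, l) \<in> E" "(u, r) \<in> E" "l \<noteq> r"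
  shows "Bu Q P E var Z c u R =
    (if u \<in> R then EI Q P E var Z u R * Ctot E c u else 0)
    + Bu Q P E var Z c r R + Bu Q P E var Z c l R"
proof -
  define f where "f w = EI Q P E var Z w R * Ctot E c w" for w
  define A where "A = R \<inter> subtree E r \<union> R \<inter> subtree E l"
  note part = subtree_children_partition[OF u]
  have Bu_eq: "Bu Q P E var Z c w R = sum f (R \<inter> subtree E w)" for w
    unfolding Bu_def f_def ..
  have "finite V" using tree unfolding rooted_binary_tree_def by blast
  then have "finite (subtree E u)" using subtree_subset_V[OF u(1)] by (rule finite_subset[rotated])
  then have "finite ({u} \<union> subtree E l \<union> subtree E r)" by (simp only: part(1))
  then have fin: "finite (R \<inter> subtree E r)" "finite (R \<inter> subtree E l)" by (simp_all add: finite_Int)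
  have "sum f A = sum f (R \<inter> subtree E r) + sum f (R \<inter> subtree E l)"
    unfolding A_def using part(2) fin by (intro sum.union_disjoint) auto
  moreover have "sum f (R \<inter> subtree E u) = (if u \<in> R then f u else 0) + sum f A"
  proof (cases "u \<in> R")
    case True
    then have "R \<inter> subtree E u = insert u A" unfolding A_def part(1) by blast
    moreover have "u \<notin> A" "finite A" unfolding A_def using part(3,4) fin by auto
    ultimately show ?thesis using True by simp
  next
    case False
    then have "R \<inter> subtree E u = A" unfolding A_def part(1) by blast
    then show ?thesis using False by simp
  qed
  ultimately show ?thesis unfolding Bu_eq f_def by simp
qed

lemma ancestors_Int_below_child:
  assumes ch: "(u, ch) \<in> E" and w: "w \<in> subtree E ch" and Ru: "Ru \<subseteq> subtree E u"
  shows "ancestors E w \<inter> Ru \<subseteq> insert u (subtree E ch \<inter> Ru)"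
proof -
  have "ancestors E u \<inter> Ru = {}" using Ru ancestors_Int_subtree[of u] by blast
  then show ?thesis using ancestors_below_child[OF ch w] by blast
qed

lemma EI_below_child:
  assumes ch: "(u, ch) \<in> E" and Ru: "Ru \<subseteq> subtree E u" and D: "D \<subseteq> ancestors E u"
    and w: "w \<in> subtree E ch \<inter> Ru"
  shows "EI Q P E var Z w (Ru \<union> D) = EI Q P E var Z w (subtree E ch \<inter> Ru \<union> (Ru \<inter> {u}) \<union> D)"
proof (rule EI_cong_ancestors)
  have "w \<notin> D" "w \<noteq> u"
    using w D subtree_child_subset[OF ch] ancestors_Int_subtree[of u] by blast+
  then show "w \<in> Ru \<union> D \<longleftrightarrow> w \<in> subtree E ch \<inter> Ru \<union> (Ru \<inter> {u}) \<union> D" using w by blast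
  show "ancestors E w \<inter> (Ru \<union> D) = ancestors E w \<inter> (subtree E ch \<inter> Ru \<union> (Ru \<inter> {u}) \<union> D)"
    using ancestors_Int_below_child[OF ch _ Ru, of w] w by blast
qed

lemma Bu_below_child:
  assumes ch: "(u, ch) \<in> E" and Ru: "Ru \<subseteq> subtree E u" and D: "D \<subseteq> ancestors E u"
  shows "Bu Q P E var Z c ch (Ru \<union> D) =
    Bu Q P E var Z c ch (subtree E ch \<inter> Ru \<union> (if u \<in> Ru then {u} else D))"
proof (rule Bu_cong)
  have sub: "subtree E ch \<subseteq> subtree E u - {u}" by (rule subtree_child_subset[OF ch])
  then show "(Ru \<union> D) \<inter> subtree E ch =
      (subtree E ch \<inter> Ru \<union> (if u \<in> Ru then {u} else D)) \<inter> subtree E ch"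
    using D ancestors_Int_subtree[of u] by auto
  fix w assume "w \<in> (Ru \<union> D) \<inter> subtree E ch"
  then have w: "w \<in> subtree E ch \<inter> Ru" "w \<notin> D"
    using sub D ancestors_Int_subtree[of u] by blast+
  have u_anc: "u \<in> ancestors E w"
    using ch w(1) by (simp add: ancestors_def subtree_def rtrancl_into_trancl2)
  show "EI Q P E var Z w (Ru \<union> D) =
      EI Q P E var Z w (subtree E ch \<inter> Ru \<union> (if u \<in> Ru then {u} else D))"
  proof (cases "u \<in> Ru")
    case True
    then have "EI Q P E var Z w (Ru \<union> D) = EI Q P E var Z w ((subtree E ch \<inter> Ru \<union> {u}) \<union> D)"
      using EI_below_child[OF ch Ru D w(1)] by (simp add: Int_insert_right)
    also have "\<dots> = EI Q P E var Z w (subtree E ch \<inter> Ru \<union> {u})"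
    proof (rule EI_Un_dominated[where b = u])
      show "vars E var u \<subseteq> vars E var a" if "a \<in> D" for a
      proof (rule vars_antimono)
        show "(a, u) \<in> E\<^sup>*" using that D by (auto simp: ancestors_def)
      qed
    qed (use w u_anc in blast)+
    finally show ?thesis using True by simp
  next
    case False
    then show ?thesis using EI_below_child[OF ch Ru D w(1)] by simp
  qed
qed

lemma Bu_insert_ancestors:
  assumes u: "u \<in> V" "(u, l) \<in> E" "(u, r) \<in> E" "l \<noteq> r" and D: "D \<subseteq> ancestors E u"
  shows "Bu Q P E var Z c u (insert u D) = EI Q P E var Z u (insert u D) * Ctot E c u"
proof -
  have "Bu Q P E var Z c ch (insert u D) = 0" if "(u, ch) \<in> E" for ch
    using subtree_child_subset[OF that] D ancestors_Int_subtree[of u] by (intro Bu_empty) blast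
  then show ?thesis using Bu_split_children[OF u, of Q P var Z c "insert u D"] u(2,3) by simp
qed

end

theorem lemma4:
  fixes V :: "'v set" and E :: "('v \<times> 'v) set" and rt :: 'v
    and X :: "'x set" and var :: "'v \<Rightarrow> 'x"
    and Q :: "'q set" and P :: "'q \<Rightarrow> real" and Z :: "'q \<Rightarrow> 'x set"
    and c :: "'v \<Rightarrow> real"
    and u l r :: 'v and Ru :: "'v set" and v :: "'v option"
  assumes tree: "rooted_binary_tree V E rt"
    and X: "finite X" "\<forall>x\<in>V. \<not> is_leaf E x \<longrightarrow> var x \<in> X"
    and Q: "finite Q" "\<forall>q\<in>Q. P q \<ge> 0" "(\<Sum>q\<in>Q. P q) = 1" "\<forall>q\<in>Q. Z q \<subseteq> X"
    and u: "u \<in> V" "(u, l) \<in> E" "(u, r) \<in> E" "l \<noteq> r"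
    and Ru: "Ru \<subseteq> subtree E u"
    and v: "\<forall>a. v = Some a \<longrightarrow> a \<in> ancestors E u"
  shows "Bu Q P E var Z c u (Ru \<union> set_option v) =
    (if u \<in> Ru then
       Bu Q P E var Z c u ({u} \<union> set_option v)
       + Bu Q P E var Z c r ((subtree E r \<inter> Ru) \<union> {u})
       + Bu Q P E var Z c l ((subtree E l \<inter> Ru) \<union> {u})
     else
       Bu Q P E var Z c r ((subtree E r \<inter> Ru) \<union> set_option v)
       + Bu Q P E var Z c l ((subtree E l \<inter> Ru) \<union> set_option v))"
proof -
  have v_anc: "set_option v \<subseteq> ancestors E u" using v by auto
  have "u \<in> subtree E u" by (simp add: subtree_def)
  then have u_selected: "u \<in> Ru \<union> set_option v \<longleftrightarrow> u \<in> Ru"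
    using v_anc ancestors_Int_subtree[OF tree, of u] by blast
  have "EI Q P E var Z u (Ru \<union> set_option v) = EI Q P E var Z u ({u} \<union> set_option v)"
    if "u \<in> Ru"
    using Ru ancestors_Int_subtree[OF tree, of u] that
    by (intro EI_cong_ancestors) (auto simp: subtree_def)
  then show ?thesis
    using u_selected Bu_split_children[OF tree u, of Q P var Z c "Ru \<union> set_option v"]
    by (simp add: Bu_insert_ancestors[OF tree u v_anc]
        Bu_below_child[OF tree u(2) Ru v_anc] Bu_below_child[OF tree u(3) Ru v_anc])
qed

end
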